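(* Let $k$ and $n$ be integers such that $k \geq 2$ and $n \geq 2k$, and let $(V,\mathcal{A}')$ be a partial $k$-star design of order $n$ with fewer than $u(n,k)$ stars. Then the leftover $L'$ of $(V,\mathcal{A}')$ contains a $k$-star.
   Context: A $k$-star is a copy of $K_{1,k}$. A partial $k$-star design of order $n$ is a pair $(V,\mathcal{A})$ where $V$ is a set of $n$ vertices and $\mathcal{A}$ is a set of edge-disjoint $k$-stars that are subgraphs of the complete graph $K_V$. The leftover of $(V,\mathcal{A})$ is the graph on vertex set $V$ whose edges are the edges of $K_V$ not lying in any star of $\mathcal{A}$. Here \[u(n,k)= \begin{cases} 2 \lfloor \frac{n-2}{k} \rfloor-1 & \text{if $n \not \equiv 1\pmod{k}$},\\ \frac{2(n-1)}{k} - 2 & \text{if $n \equiv 1\pmod{k}$.} \end{cases} \] *)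

theory Defs
  imports Main
begin

definition complete_edges :: "'a set \<Rightarrow> 'a set set" where
  "complete_edges V = {e. e \<subseteq> V \<and> card e = 2}"

(* A k-star (copy of K_{1,k}) in K_V, represented by its edge set:
   a centre c and k distinct leaves x (all in V, all different from c) *)
definition is_star :: "nat \<Rightarrow> 'a set \<Rightarrow> 'a set set \<Rightarrow> bool" where
  "is_star k V S \<longleftrightarrow> (\<exists>c X. c \<in> V \<and> X \<subseteq> V - {c} \<and> card X = k \<and>
      S = (\<lambda>x. {c, x}) ` X)"

definition partial_star_design :: "nat \<Rightarrow> nat \<Rightarrow> 'a set \<Rightarrow> 'a set set set \<Rightarrow> bool" where
  "partial_star_design n k V A \<longleftrightarrow> finite V \<and> card V = n \<and>
      (\<forall>S\<in>A. is_star k V S) \<and>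
      (\<forall>S\<in>A. \<forall>T\<in>A. S \<noteq> T \<longrightarrow> S \<inter> T = {})"

(* Edge set of the leftover graph (its vertex set is V) *)
definition leftover_edges :: "'a set \<Rightarrow> 'a set set set \<Rightarrow> 'a set set" where
  "leftover_edges V A = complete_edges V - \<Union>A"

definition u :: "nat \<Rightarrow> nat \<Rightarrow> int" where
  "u n k = (if n mod k \<noteq> 1 mod k then 2 * ((int n - 2) div int k) - 1
            else 2 * (int n - 1) div int k - 2)"

end

theory Submission
  imports Defs
begin

text \<open>Since \<open>u(n,k) \<le> n - k\<close>, fewer than \<open>u(n,k)\<close> stars have fewer than \<open>n - k\<close> centres, so
  some vertex \<open>v\<close> is the centre of no star. A star using an edge \<open>{v,x}\<close> must then be centred
  at \<open>x\<close>, so at most \<open>|A|\<close> edges at \<open>v\<close> are used, and at least \<open>n - 1 - |A| \<ge> k\<close> of them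
  lie in the leftover and form a \<open>k\<close>-star centred at \<open>v\<close>.\<close>

lemma int_mult_div_le:
  fixes m k :: int
  assumes "0 < k"
  shows "k * (m div k) \<le> m"
  using div_mult_mod_eq[of m k] pos_mod_sign[of k m] mult.commute[of k "m div k"] assms
  by linarith

lemma u_le_diff:
  assumes "k \<ge> 2" and "n \<ge> 2 * k"
  shows "u n k \<le> int n - int k"
proof -
  have k_pos: "int k > 0" using assms(1) by simp
  have "(int k - 2) * (int n - int k - 2) \<ge> 0" using assms by simp
  then have key: "2 * (int n - 2) \<le> int k * (int n - int k)" by (simp add: algebra_simps)
  show ?thesis
  proof (cases "n mod k = 1 mod k")
    case False
    define d where "d = (int n - 2) div int k"
    have "int k * d \<le> int n - 2"
      unfolding d_def by (rule int_mult_div_le[OF k_pos])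
    with key have "int k * (2 * d) \<le> int k * (int n - int k)" by (simp add: algebra_simps)
    then have "2 * d \<le> int n - int k" using k_pos by simp
    with False show ?thesis unfolding u_def d_def by simp
  next
    case True
    define q where "q = 2 * (int n - 1) div int k"
    have "int k * q \<le> 2 * (int n - 1)"
      unfolding q_def by (rule int_mult_div_le[OF k_pos])
    also have "\<dots> = 2 * (int n - 2) + 2" by simp
    also have "\<dots> \<le> int k * (int n - int k) + 2 * int k" using key assms(1) by linarith
    also have "\<dots> = int k * (int n - int k + 2)" by (simp add: algebra_simps)
    finally have "int k * q \<le> int k * (int n - int k + 2)" .
    then have "q \<le> int n - int k + 2" using k_pos by simp
    with True show ?thesis unfolding u_def q_def by simp
  qed
qed

lemma is_star_centre: "is_star k V S \<Longrightarrow> \<exists>c. \<forall>e\<in>S. c \<in> e"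
  unfolding is_star_def by auto

lemma partial_star_design_finite:
  assumes "partial_star_design n k V A"
  shows "finite A"
proof (rule finite_subset)
  show "A \<subseteq> Pow (Pow V)"
    using assms unfolding partial_star_design_def is_star_def by fastforce
  show "finite (Pow (Pow V))"
    using assms unfolding partial_star_design_def by simp
qed

definition free_neighbours :: "'a set \<Rightarrow> 'a set set set \<Rightarrow> 'a \<Rightarrow> 'a set" where
  "free_neighbours V A v = {x \<in> V - {v}. {v, x} \<notin> \<Union>A}"

lemma star_in_leftover_at:
  assumes "v \<in> V" and "k \<le> card (free_neighbours V A v)"
  shows "\<exists>S. is_star k V S \<and> S \<subseteq> leftover_edges V A"
proof -
  obtain X where X: "X \<subseteq> free_neighbours V A v" "card X = k"
    using assms(2) by (meson obtain_subset_with_card_n)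
  have "is_star k V ((\<lambda>x. {v, x}) ` X)"
    unfolding is_star_def using assms(1) X unfolding free_neighbours_def by blast
  moreover have "(\<lambda>x. {v, x}) ` X \<subseteq> leftover_edges V A"
    using assms(1) X(1)
    unfolding leftover_edges_def complete_edges_def free_neighbours_def by auto
  ultimately show ?thesis by blast
qed

text \<open>A used edge \<open>{v,x}\<close> at a non-centre \<open>v\<close> passes through the centre of its star, which
  must therefore be \<open>x\<close>: the used neighbours of \<open>v\<close> are centres.\<close>

lemma card_free_neighbours_ge:
  assumes "finite V" and "v \<in> V" and "finite A"
    and centre: "\<And>S e. S \<in> A \<Longrightarrow> e \<in> S \<Longrightarrow> cen S \<in> e"
    and "v \<notin> cen ` A"
  shows "card V - 1 - card A \<le> card (free_neighbours V A v)"
proof -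
  have used: "(V - {v}) - free_neighbours V A v \<subseteq> cen ` A"
  proof
    fix x assume "x \<in> (V - {v}) - free_neighbours V A v"
    then obtain S where S: "S \<in> A" "{v, x} \<in> S" unfolding free_neighbours_def by auto
    with centre assms(5) have "x = cen S" by fastforce
    with S(1) show "x \<in> cen ` A" by blast
  qed
  have "card (V - {v}) - card (free_neighbours V A v) \<le> card (cen ` A)"
    using card_mono[OF finite_imageI[OF assms(3)] used] diff_card_le_card_Diff[of "free_neighbours V A v" "V - {v}"]
      assms(1) by (simp add: free_neighbours_def)
  also have "\<dots> \<le> card A" using assms(3) by (rule card_image_le)
  finally show ?thesis using assms(1,2) by simp
qed

theorem lemma4:
  fixes V :: "'a set" and A :: "'a set set set" and n k :: nat
  assumes "k \<ge> 2" and "n \<ge> 2 * k"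
    and "partial_star_design n k V A"
    and "int (card A) < u n k"
  shows "\<exists>S. is_star k V S \<and> S \<subseteq> leftover_edges V A"
proof -
  have V: "finite V" "card V = n" and A: "finite A"
    using assms(3) partial_star_design_finite unfolding partial_star_design_def by auto
  obtain cen where centre: "\<And>S e. S \<in> A \<Longrightarrow> e \<in> S \<Longrightarrow> cen S \<in> e"
    using assms(3) is_star_centre unfolding partial_star_design_def by metis
  have few_stars: "card A + k < n" using u_le_diff[OF assms(1,2)] assms(4) by linarith
  have "card (cen ` A) < card V"
    using card_image_le[OF A, of cen] few_stars V(2) by linarith
  then have "\<not> V \<subseteq> cen ` A" using card_mono[OF finite_imageI[OF A]] by (meson not_le)
  then obtain v where v: "v \<in> V" "v \<notin> cen ` A" by blast
  have "k \<le> card (free_neighbours V A v)"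
    using card_free_neighbours_ge[OF V(1) v(1) A centre v(2)] few_stars V(2)
    by linarith
  with v(1) show ?thesis by (rule star_in_leftover_at)
qed

end
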